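(* Let $J$ and $J'$ be intervals and let $s,s':J\to J'$ be two shrinkings. Then $s$ and $s'$ are homotopic relative to $\partial J$; that is, the category whose objects are intervals and whose morphisms are shrinkings modulo homotopy relative to $\partial J$ is a poset.
   Context: A digraph has a vertex set and arrows $E\subseteq V\times V$ containing the diagonal; digraph maps preserve arrows. An interval is a digraph $J$ with vertices $\{0,\dots,k\}$ whose non-degenerate arrows are, for each $0\le i<k$, exactly one of $i\to i+1$ or $i+1\to i$; $\partial J=\{0,k\}$. A shrinking is a digraph map between intervals that is surjective and monotone on vertices. Two digraph maps $\varphi,\psi:J\to J'$ with $\varphi|_{\partial J}=\psi|_{\partial J}$ are homotopic relative to $\partial J$ if there is a finite chain of digraph maps $\varphi=\varphi_0,\dots,\varphi_r=\psi$, all agreeing on $\partial J$, such that for each $t$ either $\varphi_t(x)\to\varphi_{t+1}(x)$ for all vertices $x$, or $\varphi_{t+1}(x)\to\varphi_t(x)$ for all $x$. *)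

theory Defs
  imports Main
begin

text \<open>A digraph is a pair (V, E) with E a set of arrows (assumed to contain the diagonal).\<close>
type_synonym 'a digraph = "'a set \<times> ('a \<times> 'a) set"

definition digraph_map :: "'a digraph \<Rightarrow> 'b digraph \<Rightarrow> ('a \<Rightarrow> 'b) \<Rightarrow> bool" where
  "digraph_map G H f \<longleftrightarrow>
     (\<forall>x\<in>fst G. f x \<in> fst H) \<and> (\<forall>(x, y)\<in>snd G. (f x, f y) \<in> snd H)"

text \<open>The interval with vertices 0..k; for i < k, d i = True means the arrow i -> i+1,
  d i = False means the arrow i+1 -> i. Values of d at i >= k are irrelevant.\<close>
definition interval :: "nat \<Rightarrow> (nat \<Rightarrow> bool) \<Rightarrow> nat digraph" where
  "interval k d =
     ({0..k},
      {(x, y). x \<le> k \<and> y \<le> k \<and>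
         (x = y \<or> (x < k \<and> y = Suc x \<and> d x) \<or> (y < k \<and> x = Suc y \<and> \<not> d y))})"

definition interval_boundary :: "nat \<Rightarrow> nat set" where
  "interval_boundary k = {0, k}"

definition shrinking :: "nat \<Rightarrow> (nat \<Rightarrow> bool) \<Rightarrow> nat \<Rightarrow> (nat \<Rightarrow> bool) \<Rightarrow> (nat \<Rightarrow> nat) \<Rightarrow> bool" where
  "shrinking k d k' d' s \<longleftrightarrow>
     digraph_map (interval k d) (interval k' d') s \<and>
     s ` {0..k} = {0..k'} \<and> mono_on {0..k} s"

definition homotopic_rel_boundary ::
  "nat \<Rightarrow> (nat \<Rightarrow> bool) \<Rightarrow> nat \<Rightarrow> (nat \<Rightarrow> bool) \<Rightarrow> (nat \<Rightarrow> nat) \<Rightarrow> (nat \<Rightarrow> nat) \<Rightarrow> bool" where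
  "homotopic_rel_boundary k d k' d' \<phi> \<psi> \<longleftrightarrow>
     (\<forall>x\<in>interval_boundary k. \<phi> x = \<psi> x) \<and>
     (\<exists>(fs :: nat \<Rightarrow> nat \<Rightarrow> nat) r. fs 0 = \<phi> \<and> fs r = \<psi> \<and>
        (\<forall>t\<le>r. digraph_map (interval k d) (interval k' d') (fs t) \<and>
                (\<forall>x\<in>interval_boundary k. fs t x = \<phi> x)) \<and>
        (\<forall>t<r. (\<forall>x\<in>{0..k}. (fs t x, fs (Suc t) x) \<in> snd (interval k' d')) \<or>
               (\<forall>x\<in>{0..k}. (fs (Suc t) x, fs t x) \<in> snd (interval k' d'))))"

end

theory Submission
  imports Defs
begin

text \<open>Shrinkings are monotone digraph maps, and the monotone maps between two intervals
  contain the constants and are closed under pointwise max and min. For two such maps f, g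
  agreeing on the boundary, the truncations max f (min g t), t = 0, ..., k', therefore form a
  chain of maps from f to max f g; passing from t to t + 1 only raises values equal to t to
  t + 1, which is an elementary homotopy in the direction of the arrow between t and t + 1.
  Symmetrically g is homotopic to max g f = max f g.\<close>

lemma interval_vertices [simp]: "fst (interval k d) = {0..k}"
  by (simp add: interval_def)

lemma interval_arrow_iff:
  "(a, b) \<in> snd (interval k d) \<longleftrightarrow> a \<le> k \<and> b \<le> k \<and>
     (a = b \<or> (a < k \<and> b = Suc a \<and> d a) \<or> (b < k \<and> a = Suc b \<and> \<not> d b))"
  by (simp add: interval_def)

definition interval_mono_map ::
  "nat \<Rightarrow> (nat \<Rightarrow> bool) \<Rightarrow> nat \<Rightarrow> (nat \<Rightarrow> bool) \<Rightarrow> (nat \<Rightarrow> nat) \<Rightarrow> bool" where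
  "interval_mono_map k d k' d' f \<longleftrightarrow>
     digraph_map (interval k d) (interval k' d') f \<and> mono_on {0..k} f"

lemma interval_mono_map_imp_steps:
  assumes "interval_mono_map k d k' d' f" and "x < k"
  shows "f (Suc x) = f x \<or> (f (Suc x) = Suc (f x) \<and> d' (f x) = d x)"
proof -
  have map: "digraph_map (interval k d) (interval k' d') f" and mono: "mono_on {0..k} f"
    using assms(1) by (auto simp: interval_mono_map_def)
  have le: "f x \<le> f (Suc x)"
    using mono assms(2) by (auto intro: mono_onD)
  show ?thesis
  proof (cases "d x")
    case True
    then have "(x, Suc x) \<in> snd (interval k d)"
      using assms(2) by (simp add: interval_arrow_iff)
    then have "(f x, f (Suc x)) \<in> snd (interval k' d')"
      using map by (auto simp: digraph_map_def)
    then show ?thesis using le True by (auto simp: interval_arrow_iff)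
  next
    case False
    then have "(Suc x, x) \<in> snd (interval k d)"
      using assms(2) by (simp add: interval_arrow_iff)
    then have "(f (Suc x), f x) \<in> snd (interval k' d')"
      using map by (auto simp: digraph_map_def)
    then show ?thesis using le False by (auto simp: interval_arrow_iff)
  qed
qed

lemma interval_mono_mapI_steps:
  assumes range: "\<And>x. x \<le> k \<Longrightarrow> f x \<le> k'"
    and steps: "\<And>x. x < k \<Longrightarrow> f (Suc x) = f x \<or> (f (Suc x) = Suc (f x) \<and> d' (f x) = d x)"
  shows "interval_mono_map k d k' d' f"
proof -
  have "(f x, f y) \<in> snd (interval k' d')" if "(x, y) \<in> snd (interval k d)" for x y
    using that range[of x] range[of y] steps[of x] steps[of y] by (auto simp: interval_arrow_iff)
  then have "digraph_map (interval k d) (interval k' d') f"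
    using range by (auto simp: digraph_map_def)
  moreover have "f x \<le> f y" if "x \<le> y" "y \<le> k" for x y
    using that
  proof (induction y rule: dec_induct)
    case (step y)
    then show ?case using steps[of y] by auto
  qed simp
  then have "mono_on {0..k} f"
    by (auto intro: mono_onI)
  ultimately show ?thesis
    by (simp add: interval_mono_map_def)
qed

lemma interval_mono_map_iff_steps:
  "interval_mono_map k d k' d' f \<longleftrightarrow> (\<forall>x\<le>k. f x \<le> k') \<and>
     (\<forall>x<k. f (Suc x) = f x \<or> (f (Suc x) = Suc (f x) \<and> d' (f x) = d x))"
proof
  assume "interval_mono_map k d k' d' f"
  then show "(\<forall>x\<le>k. f x \<le> k') \<and>
     (\<forall>x<k. f (Suc x) = f x \<or> (f (Suc x) = Suc (f x) \<and> d' (f x) = d x))"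
    using interval_mono_map_imp_steps by (auto simp: interval_mono_map_def digraph_map_def)
qed (auto intro: interval_mono_mapI_steps)

lemma interval_mono_map_const: "c \<le> k' \<Longrightarrow> interval_mono_map k d k' d' (\<lambda>x. c)"
  by (simp add: interval_mono_map_iff_steps)

lemma max_unit_step:
  fixes a b a' b' :: nat
  assumes "b = a \<or> (b = Suc a \<and> P a)" and "b' = a' \<or> (b' = Suc a' \<and> P a')"
  shows "max b b' = max a a' \<or> (max b b' = Suc (max a a') \<and> P (max a a'))"
  using assms by (auto simp: max_def dest: le_antisym)

lemma min_unit_step:
  fixes a b a' b' :: nat
  assumes "b = a \<or> (b = Suc a \<and> P a)" and "b' = a' \<or> (b' = Suc a' \<and> P a')"
  shows "min b b' = min a a' \<or> (min b b' = Suc (min a a') \<and> P (min a a'))"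
  using assms by (auto simp: min_def dest: le_antisym)

lemma interval_mono_map_max:
  assumes "interval_mono_map k d k' d' f" "interval_mono_map k d k' d' g"
  shows "interval_mono_map k d k' d' (\<lambda>x. max (f x) (g x))"
  using assms max_unit_step[where P = "\<lambda>c. d' c = d x" for x]
  unfolding interval_mono_map_iff_steps by simp

lemma interval_mono_map_min:
  assumes "interval_mono_map k d k' d' f" "interval_mono_map k d k' d' g"
  shows "interval_mono_map k d k' d' (\<lambda>x. min (f x) (g x))"
  using assms min_unit_step[where P = "\<lambda>c. d' c = d x" for x]
  unfolding interval_mono_map_iff_steps by (simp add: min_le_iff_disj)

lemma shrinking_imp_interval_mono_map:
  "shrinking k d k' d' s \<Longrightarrow> interval_mono_map k d k' d' s"
  by (simp add: shrinking_def interval_mono_map_def)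

lemma shrinking_boundary:
  assumes "shrinking k d k' d' s"
  shows "s 0 = 0" "s k = k'"
proof -
  have im: "s ` {0..k} = {0..k'}" and mono: "mono_on {0..k} s"
    using assms by (auto simp: shrinking_def)
  obtain x where "x \<le> k" "s x = 0"
    using im by (metis atLeastAtMost_iff imageE le0)
  with mono have "s 0 \<le> 0"
    by (metis atLeastAtMost_iff le0 mono_onD)
  then show "s 0 = 0" by simp
  obtain y where "y \<le> k" "s y = k'"
    using im by (metis atLeastAtMost_iff imageE order_refl le0)
  with mono have "k' \<le> s k"
    by (metis atLeastAtMost_iff le0 order_refl mono_onD)
  moreover have "s k \<le> k'"
    using im by auto
  ultimately show "s k = k'" by simp
qed

definition one_step_homotopic ::
  "nat \<Rightarrow> nat \<Rightarrow> (nat \<Rightarrow> bool) \<Rightarrow> (nat \<Rightarrow> nat) \<Rightarrow> (nat \<Rightarrow> nat) \<Rightarrow> bool" where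
  "one_step_homotopic k k' d' f g \<longleftrightarrow>
     (\<forall>x\<in>{0..k}. (f x, g x) \<in> snd (interval k' d')) \<or>
     (\<forall>x\<in>{0..k}. (g x, f x) \<in> snd (interval k' d'))"

lemma one_step_homotopic_commute:
  "one_step_homotopic k k' d' f g \<longleftrightarrow> one_step_homotopic k k' d' g f"
  by (auto simp: one_step_homotopic_def)

lemma one_step_homotopic_raise_level:
  assumes "\<And>x. x \<le> k \<Longrightarrow> f x \<le> k' \<and> g x \<le> k'"
    and "\<And>x. x \<le> k \<Longrightarrow> g x = f x \<or> (f x = c \<and> g x = Suc c)"
  shows "one_step_homotopic k k' d' f g"
proof (cases "d' c")
  case True
  have "(f x, g x) \<in> snd (interval k' d')" if "x \<le> k" for x
    using assms[OF that] True by (auto simp: interval_arrow_iff)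
  then show ?thesis by (simp add: one_step_homotopic_def)
next
  case False
  have "(g x, f x) \<in> snd (interval k' d')" if "x \<le> k" for x
    using assms[OF that] False by (auto simp: interval_arrow_iff)
  then show ?thesis by (simp add: one_step_homotopic_def)
qed

lemma homotopic_rel_boundaryI:
  assumes "fs 0 = \<phi>" and "fs r = \<psi>"
    and "\<And>t. t \<le> r \<Longrightarrow> digraph_map (interval k d) (interval k' d') (fs t)"
    and "\<And>t x. t \<le> r \<Longrightarrow> x \<in> interval_boundary k \<Longrightarrow> fs t x = \<phi> x"
    and "\<And>t. t < r \<Longrightarrow> one_step_homotopic k k' d' (fs t) (fs (Suc t))"
  shows "homotopic_rel_boundary k d k' d' \<phi> \<psi>"
proof -
  have "\<forall>x\<in>interval_boundary k. \<phi> x = \<psi> x"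
    using assms(2) assms(4)[of r] by simp
  moreover have "\<forall>t<r. one_step_homotopic k k' d' (fs t) (fs (Suc t))"
    using assms(5) by blast
  ultimately show ?thesis
    unfolding homotopic_rel_boundary_def one_step_homotopic_def
    using assms(1-4) by (intro conjI exI[of _ fs] exI[of _ r]) auto
qed

lemma homotopic_rel_boundaryE:
  assumes "homotopic_rel_boundary k d k' d' \<phi> \<psi>"
  obtains fs r where "fs 0 = \<phi>" and "fs r = \<psi>"
    and "\<And>t. t \<le> r \<Longrightarrow> digraph_map (interval k d) (interval k' d') (fs t)"
    and "\<And>t x. t \<le> r \<Longrightarrow> x \<in> interval_boundary k \<Longrightarrow> fs t x = \<phi> x"
    and "\<And>t. t < r \<Longrightarrow> one_step_homotopic k k' d' (fs t) (fs (Suc t))"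
proof -
  from assms obtain fs r where "fs 0 = \<phi> \<and> fs r = \<psi> \<and>
      (\<forall>t\<le>r. digraph_map (interval k d) (interval k' d') (fs t) \<and>
        (\<forall>x\<in>interval_boundary k. fs t x = \<phi> x)) \<and>
      (\<forall>t<r. one_step_homotopic k k' d' (fs t) (fs (Suc t)))"
    unfolding homotopic_rel_boundary_def one_step_homotopic_def by blast
  then show thesis
    using that by blast
qed

lemma homotopic_rel_boundary_sym:
  assumes "homotopic_rel_boundary k d k' d' \<phi> \<psi>"
  shows "homotopic_rel_boundary k d k' d' \<psi> \<phi>"
proof -
  obtain fs r where fs: "fs 0 = \<phi>" "fs r = \<psi>"
    "\<And>t. t \<le> r \<Longrightarrow> digraph_map (interval k d) (interval k' d') (fs t)"
    "\<And>t x. t \<le> r \<Longrightarrow> x \<in> interval_boundary k \<Longrightarrow> fs t x = \<phi> x"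
    "\<And>t. t < r \<Longrightarrow> one_step_homotopic k k' d' (fs t) (fs (Suc t))"
    using assms by (rule homotopic_rel_boundaryE) blast
  show ?thesis
  proof (rule homotopic_rel_boundaryI[where fs = "\<lambda>t. fs (r - t)" and r = r])
    fix t assume "t < r"
    then have "Suc (r - Suc t) = r - t" by simp
    then show "one_step_homotopic k k' d' (fs (r - t)) (fs (r - Suc t))"
      using fs(5)[of "r - Suc t"] \<open>t < r\<close> by (simp add: one_step_homotopic_commute)
  next
    fix t x assume "t \<le> r" "x \<in> interval_boundary k"
    then show "fs (r - t) x = \<psi> x"
      using fs(2) fs(4)[of "r - t" x] fs(4)[of r x] by simp
  qed (use fs(1-3) in simp_all)
qed

lemma homotopic_rel_boundary_trans:
  assumes "homotopic_rel_boundary k d k' d' \<phi> \<psi>"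
    and "homotopic_rel_boundary k d k' d' \<psi> \<chi>"
  shows "homotopic_rel_boundary k d k' d' \<phi> \<chi>"
proof -
  obtain fs r where fs: "fs 0 = \<phi>" "fs r = \<psi>"
    "\<And>t. t \<le> r \<Longrightarrow> digraph_map (interval k d) (interval k' d') (fs t)"
    "\<And>t x. t \<le> r \<Longrightarrow> x \<in> interval_boundary k \<Longrightarrow> fs t x = \<phi> x"
    "\<And>t. t < r \<Longrightarrow> one_step_homotopic k k' d' (fs t) (fs (Suc t))"
    using assms(1) by (rule homotopic_rel_boundaryE) blast
  obtain gs r' where gs: "gs 0 = \<psi>" "gs r' = \<chi>"
    "\<And>t. t \<le> r' \<Longrightarrow> digraph_map (interval k d) (interval k' d') (gs t)"
    "\<And>t x. t \<le> r' \<Longrightarrow> x \<in> interval_boundary k \<Longrightarrow> gs t x = \<psi> x"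
    "\<And>t. t < r' \<Longrightarrow> one_step_homotopic k k' d' (gs t) (gs (Suc t))"
    using assms(2) by (rule homotopic_rel_boundaryE) blast
  show ?thesis
  proof (rule homotopic_rel_boundaryI
      [where fs = "\<lambda>t. if t \<le> r then fs t else gs (t - r)" and r = "r + r'"])
    fix t assume "t < r + r'"
    consider "t < r" | "t = r" | "r < t" by linarith
    then show "one_step_homotopic k k' d' (if t \<le> r then fs t else gs (t - r))
        (if Suc t \<le> r then fs (Suc t) else gs (Suc t - r))"
    proof cases
      case 1
      then show ?thesis using fs(5) by simp
    next
      case 2
      then show ?thesis using fs(2) gs(1) gs(5)[of 0] \<open>t < r + r'\<close> by simp
    next
      case 3
      then show ?thesis using gs(5)[of "t - r"] \<open>t < r + r'\<close> by (simp add: Suc_diff_le)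
    qed
  next
    fix t assume "t \<le> r + r'"
    then show "digraph_map (interval k d) (interval k' d') (if t \<le> r then fs t else gs (t - r))"
      using fs(3)[of t] gs(3)[of "t - r"] by simp
  next
    fix t x assume "t \<le> r + r'" "x \<in> interval_boundary k"
    then show "(if t \<le> r then fs t else gs (t - r)) x = \<phi> x"
      using fs(2) fs(4)[of t x] fs(4)[of r x] gs(4)[of "t - r" x] by simp
  qed (use fs(1,2) gs(1,2) in auto)
qed

lemma homotopic_rel_boundary_max:
  assumes f: "interval_mono_map k d k' d' f" and g: "interval_mono_map k d k' d' g"
    and boundary: "\<And>x. x \<in> interval_boundary k \<Longrightarrow> f x = g x"
  shows "homotopic_rel_boundary k d k' d' f (\<lambda>x. max (f x) (g x))"
proof -
  \<comment> \<open>The last step changes nothing on {0..k}; it is needed because the chain must end in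
    max f g as a function on all of nat.\<close>
  define fs where "fs t = (if t \<le> k' then (\<lambda>x. max (f x) (min (g x) t))
    else (\<lambda>x. max (f x) (g x)))" for t
  have maps: "interval_mono_map k d k' d' (fs t)" for t
    using f g by (simp add: fs_def interval_mono_map_max interval_mono_map_min
        interval_mono_map_const)
  have range: "f x \<le> k'" "g x \<le> k'" if "x \<le> k" for x
    using f g that by (simp_all add: interval_mono_map_iff_steps)
  show ?thesis
  proof (rule homotopic_rel_boundaryI[where fs = fs and r = "Suc k'"])
    fix t assume "t < Suc k'"
    show "one_step_homotopic k k' d' (fs t) (fs (Suc t))"
    proof (rule one_step_homotopic_raise_level[where c = t])
      fix x assume "x \<le> k"
      then show "fs t x \<le> k' \<and> fs (Suc t) x \<le> k'"
        using range by (simp add: fs_def min_le_iff_disj)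
      show "fs (Suc t) x = fs t x \<or> (fs t x = t \<and> fs (Suc t) x = Suc t)"
        using range[OF \<open>x \<le> k\<close>] \<open>t < Suc k'\<close> by (auto simp: fs_def max_def min_def)
    qed
  qed (use maps boundary in \<open>auto simp: fs_def interval_mono_map_def\<close>)
qed

theorem mainTheorem7:
  fixes k k' :: nat and d d' :: "nat \<Rightarrow> bool" and s s' :: "nat \<Rightarrow> nat"
  assumes "shrinking k d k' d' s"
    and "shrinking k d k' d' s'"
  shows "homotopic_rel_boundary k d k' d' s s'"
proof -
  have maps: "interval_mono_map k d k' d' s" "interval_mono_map k d k' d' s'"
    using assms by (simp_all add: shrinking_imp_interval_mono_map)
  have boundary: "s x = s' x" if "x \<in> interval_boundary k" for x
    using that shrinking_boundary[OF assms(1)] shrinking_boundary[OF assms(2)]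
    by (auto simp: interval_boundary_def)
  have "homotopic_rel_boundary k d k' d' s (\<lambda>x. max (s x) (s' x))"
    using maps boundary by (rule homotopic_rel_boundary_max)
  moreover have "homotopic_rel_boundary k d k' d' s' (\<lambda>x. max (s x) (s' x))"
    using homotopic_rel_boundary_max[OF maps(2,1) boundary[symmetric]]
    by (simp add: max.commute)
  ultimately show ?thesis
    by (blast intro: homotopic_rel_boundary_trans homotopic_rel_boundary_sym)
qed

end
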